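(* For a sample $X_1,\dots,X_n$ over the finite alphabet $A$ and arbitrary constants $0<c_1<c_2$, we have $\hat\tau_{\mathrm{BIC}}(X_1^n;c_1)\succeq\hat\tau_{\mathrm{BIC}}(X_1^n;c_2)$, where $\hat\tau_{\mathrm{BIC}}(X_1^n;c)=\arg\max_{\tau\in\mathcal{T}_n}\{\log L_\tau(X_1^n)-c\cdot\mathrm{df}(\tau)\cdot\log n\}$.
   Context: Strings: for a finite alphabet $A$, $w_m^n=(w_m,\dots,w_n)$, with length $\ell(w_m^n)=n-m+1$. A string $s_{-j}^{-1}$ is a suffix of $w_{-k}^{-1}$, written $s\preceq w$, if $j\le k$ and $s_{-i}=w_{-i}$ for $i=1,\dots,j$. An irreducible tree is a finite set $\tau$ of finite strings such that no element of $\tau$ has a proper suffix in $\tau$, and no element of $\tau$ can be replaced by a proper suffix without violating this property. Its height is $\ell(\tau)=\max\{\ell(w):w\in\tau\}$. Partial order on trees: $\tau\preceq\tau'$ (equivalently $\tau'\succeq\tau$) if for every $v\in\tau'$ there is $w\in\tau$ with $w\preceq v$. Fix a function $d(n)\to\infty$. For a string $w_{-j}^0$ with $j\le d(n)$, $N_n(w_{-j}^0)=\sum_{t=d(n)+1}^n \mathbf 1\{X_{t-j}^t=w_{-j}^0\}$. For $w$ with $\sum_{b\in A}N_n(wb)>0$, $\hat p_n(a|w)=N_n(wa)/\sum_{b\in A}N_n(wb)$ ($wa$ is concatenation). The likelihood of a tree $\tau$ is $L_\tau(X_1^n)=\prod_{w\in\tau}\prod_{a\in A}\hat p_n(a|w)^{N_n(wa)}$.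 $\mathcal{T}_n$ is the set of irreducible trees $\tau$ with $\ell(\tau)\le d(n)$, with $\sum_b N_n(wb)>0$ for all $w\in\tau$, and such that every string $u$ with $\sum_b N_n(ub)>0$ has a suffix in $\tau$ or is a suffix (proper or not) of an element of $\tau$. Degrees of freedom: given an incidence function $\chi$ from finite strings to $\{0,1\}$ (with $\chi(wa)=0$ meaning the transition from $w$ to $a$ is not allowed), consistent in the sense that $\chi(w_{-j}^{-1}a)=0$ implies $\chi(w_{-k}^{-1}a)=0$ for all $k\ge j$, set $\mathrm{df}(\tau)=\sum_{w\in\tau}\sum_{a\in A}\chi(wa)$ (without restrictions $\mathrm{df}(\tau)=(|A|-1)|\tau|$). *)

theory Defs
  imports Complex_Main "HOL-Library.Sublist"
begin

text \<open>Strings w_{-k}^{-1} are lists [w_{-k}, ..., w_{-1}]; the paper's suffix relation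
  is then exactly list suffix (HOL-Library.Sublist).  The sample is X :: nat => 'a,
  of which only X 1, ..., X n are used.  The alphabet A is the finite type 'a.\<close>

definition suffix_free :: "'a list set \<Rightarrow> bool" where
  "suffix_free \<tau> \<longleftrightarrow> (\<forall>w\<in>\<tau>. \<not> (\<exists>v\<in>\<tau>. strict_suffix v w))"

definition irreducible_tree :: "'a list set \<Rightarrow> bool" where
  "irreducible_tree \<tau> \<longleftrightarrow> finite \<tau> \<and> suffix_free \<tau> \<and>
     (\<forall>w\<in>\<tau>. \<forall>s. strict_suffix s w \<longrightarrow> \<not> suffix_free (insert s (\<tau> - {w})))"

definition tree_height :: "'a list set \<Rightarrow> nat" where
  "tree_height \<tau> = Max (insert 0 (length ` \<tau>))"

definition tree_le :: "'a list set \<Rightarrow> 'a list set \<Rightarrow> bool" where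
  "tree_le \<tau> \<tau>' \<longleftrightarrow> (\<forall>v\<in>\<tau>'. \<exists>w\<in>\<tau>. suffix w v)"

text \<open>N_n(w_{-j}^0) for a string w of length j+1 (used only when j <= d n).\<close>
definition Ncount :: "(nat \<Rightarrow> 'a) \<Rightarrow> (nat \<Rightarrow> nat) \<Rightarrow> nat \<Rightarrow> 'a list \<Rightarrow> nat" where
  "Ncount X d n w = card {t \<in> {d n + 1..n}. \<forall>i<length w. X (t + 1 - length w + i) = w ! i}"

definition Ntot :: "(nat \<Rightarrow> 'a::finite) \<Rightarrow> (nat \<Rightarrow> nat) \<Rightarrow> nat \<Rightarrow> 'a list \<Rightarrow> nat" where
  "Ntot X d n w = (\<Sum>b\<in>UNIV. Ncount X d n (w @ [b]))"

definition phat :: "(nat \<Rightarrow> 'a::finite) \<Rightarrow> (nat \<Rightarrow> nat) \<Rightarrow> nat \<Rightarrow> 'a \<Rightarrow> 'a list \<Rightarrow> real" where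
  "phat X d n a w = real (Ncount X d n (w @ [a])) / real (Ntot X d n w)"

definition likelihood :: "(nat \<Rightarrow> 'a::finite) \<Rightarrow> (nat \<Rightarrow> nat) \<Rightarrow> nat \<Rightarrow> 'a list set \<Rightarrow> real" where
  "likelihood X d n \<tau> = (\<Prod>w\<in>\<tau>. \<Prod>a\<in>UNIV. phat X d n a w ^ Ncount X d n (w @ [a]))"

definition cand_trees :: "(nat \<Rightarrow> 'a::finite) \<Rightarrow> (nat \<Rightarrow> nat) \<Rightarrow> nat \<Rightarrow> 'a list set set" where
  "cand_trees X d n = {\<tau>. irreducible_tree \<tau> \<and> tree_height \<tau> \<le> d n \<and>
      (\<forall>w\<in>\<tau>. Ntot X d n w > 0) \<and>
      (\<forall>u. length u \<le> d n \<longrightarrow> Ntot X d n u > 0 \<longrightarrow>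
           (\<exists>w\<in>\<tau>. suffix w u) \<or> (\<exists>w\<in>\<tau>. suffix u w))}"

text \<open>Incidence function: chi (w @ [a]) = False means the transition w -> a is not allowed.\<close>
definition consistent_incidence :: "('a list \<Rightarrow> bool) \<Rightarrow> bool" where
  "consistent_incidence chi \<longleftrightarrow>
     (\<forall>s w a. suffix s w \<longrightarrow> \<not> chi (s @ [a]) \<longrightarrow> \<not> chi (w @ [a]))"

definition df :: "('a::finite list \<Rightarrow> bool) \<Rightarrow> 'a list set \<Rightarrow> nat" where
  "df chi \<tau> = (\<Sum>w\<in>\<tau>. card {a. chi (w @ [a])})"

definition bic_crit :: "(nat \<Rightarrow> 'a::finite) \<Rightarrow> (nat \<Rightarrow> nat) \<Rightarrow> ('a list \<Rightarrow> bool) \<Rightarrow> nat \<Rightarrow> real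
     \<Rightarrow> 'a list set \<Rightarrow> real" where
  "bic_crit X d chi n c \<tau> = ln (likelihood X d n \<tau>) - c * real (df chi \<tau>) * ln (real n)"

definition is_bic_max :: "(nat \<Rightarrow> 'a::finite) \<Rightarrow> (nat \<Rightarrow> nat) \<Rightarrow> ('a list \<Rightarrow> bool) \<Rightarrow> nat \<Rightarrow> real
     \<Rightarrow> 'a list set \<Rightarrow> bool" where
  "is_bic_max X d chi n c \<tau> \<longleftrightarrow> \<tau> \<in> cand_trees X d n \<and>
     (\<forall>\<tau>'\<in>cand_trees X d n. bic_crit X d chi n c \<tau>' \<le> bic_crit X d chi n c \<tau>)"

definition tau_bic :: "(nat \<Rightarrow> 'a::finite) \<Rightarrow> (nat \<Rightarrow> nat) \<Rightarrow> ('a list \<Rightarrow> bool) \<Rightarrow> nat \<Rightarrow> real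
     \<Rightarrow> 'a list set" where
  "tau_bic X d chi n c = (THE \<tau>. is_bic_max X d chi n c \<tau>)"

end

theory Submission
  imports Defs
begin

(*
  Two candidate trees t1 and t2 have a join and a meet (on every branch the deeper, resp. the
  shallower, of their leaves) which are again candidate trees, with the same union and intersection
  as t1 and t2. Since the BIC criterion is a sum over leaves, crit(join) + crit(meet) =
  crit(t1) + crit(t2). Passing from t2 to the meet pools counts, which by Gibbs' inequality cannot
  increase the maximised likelihood; so if t2 beats the meet at penalty c2, it also beats it at the
  smaller penalty c1. By modularity the join then does at least as well as t1 at penalty c1, so by
  uniqueness the join is t1, and t1 refines t2.
*)

section \<open>Join and meet of suffix trees\<close>

lemma suffix_freeD:
  assumes "suffix_free \<tau>" "v \<in> \<tau>" "w \<in> \<tau>" "suffix v w"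
  shows "v = w"
  using assms unfolding suffix_free_def strict_suffix_def by blast

lemma irreducible_tree_iff:
  "irreducible_tree \<tau> \<longleftrightarrow> finite \<tau> \<and> suffix_free \<tau> \<and>
     (\<forall>w\<in>\<tau>. \<forall>s. strict_suffix s w \<longrightarrow> (\<exists>y\<in>\<tau>. y \<noteq> w \<and> strict_suffix s y))"
proof -
  have "\<not> suffix_free (insert s (\<tau> - {w})) \<longleftrightarrow> (\<exists>y\<in>\<tau>. y \<noteq> w \<and> strict_suffix s y)"
    if "suffix_free \<tau>" "w \<in> \<tau>" "strict_suffix s w" for w s
  proof
    assume "\<not> suffix_free (insert s (\<tau> - {w}))"
    then obtain a b where ab: "a \<in> insert s (\<tau> - {w})" "b \<in> insert s (\<tau> - {w})" "strict_suffix b a"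
      unfolding suffix_free_def by blast
    show "\<exists>y\<in>\<tau>. y \<noteq> w \<and> strict_suffix s y"
    proof (cases "a = s")
      case True
      then have "b \<in> \<tau>" "strict_suffix b w"
        using ab \<open>strict_suffix s w\<close> suffix_order.less_trans by auto
      then show ?thesis using that(1,2) unfolding suffix_free_def by blast
    next
      case False
      then show ?thesis using ab that(1) unfolding suffix_free_def by blast
    qed
  qed (auto simp: suffix_free_def)
  then show ?thesis unfolding irreducible_tree_def by blast
qed

lemma irreducible_treeD:
  "irreducible_tree \<tau> \<Longrightarrow> w \<in> \<tau> \<Longrightarrow> strict_suffix s w \<Longrightarrow> \<exists>y\<in>\<tau>. y \<noteq> w \<and> strict_suffix s y"
  unfolding irreducible_tree_iff by blast

definition covers :: "'a list set \<Rightarrow> 'a list \<Rightarrow> bool" where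
  "covers \<tau> u \<longleftrightarrow> (\<exists>w\<in>\<tau>. suffix w u \<or> suffix u w)"

(* On every branch, tree_join keeps the deeper and tree_meet the shallower of the two leaves. *)
definition tree_join :: "'a list set \<Rightarrow> 'a list set \<Rightarrow> 'a list set" where
  "tree_join \<tau> \<sigma> = {w\<in>\<tau>. \<exists>v\<in>\<sigma>. suffix v w} \<union> {w\<in>\<sigma>. \<exists>v\<in>\<tau>. strict_suffix v w}"

definition tree_meet :: "'a list set \<Rightarrow> 'a list set \<Rightarrow> 'a list set" where
  "tree_meet \<tau> \<sigma> = {w\<in>\<tau>. \<exists>v\<in>\<sigma>. suffix w v} \<union> {w\<in>\<sigma>. \<exists>v\<in>\<tau>. strict_suffix w v}"

lemma tree_le_tree_join: "tree_le \<sigma> (tree_join \<tau> \<sigma>)"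
  unfolding tree_le_def tree_join_def by blast

locale compatible_trees =
  fixes t1 t2 :: "'a list set"
  assumes suffix_free1: "suffix_free t1" and suffix_free2: "suffix_free t2"
    and covers12: "\<And>w. w \<in> t1 \<Longrightarrow> covers t2 w"
    and covers21: "\<And>w. w \<in> t2 \<Longrightarrow> covers t1 w"
begin

lemma no_strict_suffix1: "v \<in> t1 \<Longrightarrow> w \<in> t1 \<Longrightarrow> \<not> strict_suffix v w"
  using suffix_free1 unfolding suffix_free_def by blast

lemma no_strict_suffix2: "v \<in> t2 \<Longrightarrow> w \<in> t2 \<Longrightarrow> \<not> strict_suffix v w"
  using suffix_free2 unfolding suffix_free_def by blast

lemma comparable12: "w \<in> t1 \<Longrightarrow> \<exists>v\<in>t2. strict_suffix v w \<or> v = w \<or> strict_suffix w v"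
  using covers12[of w] unfolding covers_def strict_suffix_def by blast

lemma comparable21: "w \<in> t2 \<Longrightarrow> \<exists>v\<in>t1. strict_suffix v w \<or> v = w \<or> strict_suffix w v"
  using covers21[of w] unfolding covers_def strict_suffix_def by blast

lemma tree_join_Un_tree_meet: "tree_join t1 t2 \<union> tree_meet t1 t2 = t1 \<union> t2"
proof -
  have "w \<in> tree_join t1 t2 \<union> tree_meet t1 t2" if "w \<in> t1 \<union> t2" for w
    using that comparable12[of w] comparable21[of w]
    unfolding tree_join_def tree_meet_def strict_suffix_def by blast
  then show ?thesis unfolding tree_join_def tree_meet_def by auto
qed

lemma tree_join_Int_tree_meet: "tree_join t1 t2 \<inter> tree_meet t1 t2 = t1 \<inter> t2"
proof -
  have "w \<in> t1 \<inter> t2" if J: "w \<in> tree_join t1 t2" and M: "w \<in> tree_meet t1 t2" for w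
  proof (cases "w \<in> t1")
    case True
    show ?thesis
    proof (rule ccontr)
      assume "w \<notin> t1 \<inter> t2"
      then obtain v v' where "v \<in> t2" "suffix v w" "v' \<in> t2" "suffix w v'"
        using J M True unfolding tree_join_def tree_meet_def by blast
      then have "v = v'" using suffix_freeD[OF suffix_free2] suffix_order.trans by blast
      then show False
        using \<open>suffix v w\<close> \<open>suffix w v'\<close> \<open>v' \<in> t2\<close> \<open>w \<notin> t1 \<inter> t2\<close> True
          suffix_order.antisym by blast
    qed
  next
    case False
    then obtain v u where "v \<in> t1" "strict_suffix v w" "u \<in> t1" "strict_suffix w u"
      using J M unfolding tree_join_def tree_meet_def by blast
    then show ?thesis using no_strict_suffix1 suffix_order.less_trans by blast
  qed
  then show ?thesis unfolding tree_join_def tree_meet_def by auto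
qed

lemma tree_join_subset: "tree_join t1 t2 \<subseteq> t1 \<union> t2"
  unfolding tree_join_def by blast

lemma tree_meet_subset: "tree_meet t1 t2 \<subseteq> t1 \<union> t2"
  unfolding tree_meet_def by blast

lemma suffix_free_tree_join: "suffix_free (tree_join t1 t2)"
  unfolding suffix_free_def
proof (intro ballI notI, elim bexE)
  fix a b assume a: "a \<in> tree_join t1 t2" and b: "b \<in> tree_join t1 t2" and ba: "strict_suffix b a"
  consider "a \<in> t1" "b \<in> t1" | "a \<in> t2" "b \<in> t2" | "a \<in> t1" "a \<notin> t2" "b \<in> t2" "b \<notin> t1"
    | "a \<in> t2" "a \<notin> t1" "b \<in> t1" "b \<notin> t2"
    using a b tree_join_subset by blast
  then show False
  proof cases
    case 3
    obtain u where u: "u \<in> t2" "suffix u a" using a 3 unfolding tree_join_def by blast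
    obtain v where v: "v \<in> t1" "strict_suffix v b" using b 3 unfolding tree_join_def by blast
    have "suffix u b \<or> suffix b u"
      using u(2) ba suffix_same_cases unfolding strict_suffix_def by blast
    then have "u = b" using suffix_freeD[OF suffix_free2] u(1) 3(3) by metis
    then have "strict_suffix v a" using u v suffix_order.less_le_trans by blast
    then show False using no_strict_suffix1 v(1) 3(1) by blast
  next
    case 4
    obtain u where "u \<in> t2" "suffix u b" using b 4 unfolding tree_join_def by blast
    then show False using no_strict_suffix2 4(1) ba suffix_order.le_less_trans by blast
  qed (use ba no_strict_suffix1 no_strict_suffix2 in blast)+
qed

lemma suffix_free_tree_meet: "suffix_free (tree_meet t1 t2)"
  unfolding suffix_free_def
proof (intro ballI notI, elim bexE)
  fix a b assume a: "a \<in> tree_meet t1 t2" and b: "b \<in> tree_meet t1 t2" and ba: "strict_suffix b a"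
  consider "a \<in> t1" "b \<in> t1" | "a \<in> t2" "b \<in> t2" | "a \<in> t1" "a \<notin> t2" "b \<in> t2"
    | "a \<in> t2" "a \<notin> t1" "b \<in> t1"
    using a b tree_meet_subset by blast
  then show False
  proof cases
    case 3
    obtain v where "v \<in> t2" "suffix a v" using a 3 unfolding tree_meet_def by blast
    then show False using no_strict_suffix2 3(3) ba suffix_order.less_le_trans by blast
  next
    case 4
    obtain u where "u \<in> t1" "strict_suffix a u" using a 4 unfolding tree_meet_def by blast
    then show False using no_strict_suffix1 4(3) ba suffix_order.less_trans by blast
  qed (use ba no_strict_suffix1 no_strict_suffix2 in blast)+
qed

lemma irreducible_tree_join:
  assumes "irreducible_tree t1" "irreducible_tree t2"
  shows "irreducible_tree (tree_join t1 t2)"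
  unfolding irreducible_tree_iff
proof (intro conjI ballI allI impI suffix_free_tree_join)
  show "finite (tree_join t1 t2)"
    using assms tree_join_subset finite_subset unfolding irreducible_tree_def by blast
  fix w s assume w: "w \<in> tree_join t1 t2" and s: "strict_suffix s w"
  show "\<exists>y\<in>tree_join t1 t2. y \<noteq> w \<and> strict_suffix s y"
  proof (cases "w \<in> t1")
    case True
    obtain y where y: "y \<in> t1" "y \<noteq> w" "strict_suffix s y"
      using irreducible_treeD[OF assms(1) True s] by blast
    obtain v where v: "v \<in> t2" "strict_suffix v y \<or> v = y \<or> strict_suffix y v"
      using comparable12[OF y(1)] by blast
    show ?thesis
    proof (cases "strict_suffix y v")
      case False
      then have "y \<in> tree_join t1 t2" using v y unfolding tree_join_def strict_suffix_def by blast
      then show ?thesis using y by blast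
    next
      case True
      then have "v \<in> tree_join t1 t2" "v \<noteq> w" "strict_suffix s v"
        using v y \<open>w \<in> t1\<close> no_strict_suffix1 suffix_order.less_trans
        unfolding tree_join_def by blast+
      then show ?thesis by blast
    qed
  next
    case False
    then have "w \<in> t2" using w unfolding tree_join_def by blast
    obtain y where y: "y \<in> t2" "y \<noteq> w" "strict_suffix s y"
      using irreducible_treeD[OF assms(2) \<open>w \<in> t2\<close> s] by blast
    obtain z where z: "z \<in> t1" "strict_suffix z y \<or> z = y \<or> strict_suffix y z"
      using comparable21[OF y(1)] by blast
    show ?thesis
    proof (cases "strict_suffix y z")
      case False
      then have "y \<in> tree_join t1 t2" using z y unfolding tree_join_def by blast
      then show ?thesis using y by blast
    next
      case True
      then have "z \<in> tree_join t1 t2" "z \<noteq> w" "strict_suffix s z"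
        using z y \<open>w \<notin> t1\<close> suffix_order.less_trans
        unfolding tree_join_def strict_suffix_def by blast+
      then show ?thesis by blast
    qed
  qed
qed

lemma irreducible_tree_meet:
  assumes "irreducible_tree t1" "irreducible_tree t2"
  shows "irreducible_tree (tree_meet t1 t2)"
  unfolding irreducible_tree_iff
proof (intro conjI ballI allI impI suffix_free_tree_meet)
  show "finite (tree_meet t1 t2)"
    using assms tree_meet_subset finite_subset unfolding irreducible_tree_def by blast
  fix w s assume w: "w \<in> tree_meet t1 t2" and s: "strict_suffix s w"
  (* Take a sibling y of w in the tree containing w. If y is not in the meet, a leaf z of the
     other tree is a strict suffix of y; z is in the meet, and it is not a suffix of s because
     w lies below a leaf of the same tree as z. *)
  obtain y z where "strict_suffix s y" "suffix z y"
    and z: "z \<in> tree_meet t1 t2" "z \<noteq> w" "\<not> suffix z s"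
  proof (cases "w \<in> t1")
    case True
    obtain v0 where v0: "v0 \<in> t2" "suffix w v0"
      using w True no_strict_suffix1 unfolding tree_meet_def by blast
    obtain y where y: "y \<in> t1" "y \<noteq> w" "strict_suffix s y"
      using irreducible_treeD[OF assms(1) True s] by blast
    show thesis
    proof (cases "y \<in> tree_meet t1 t2")
      case False
      then obtain z where "z \<in> t2" "strict_suffix z y"
        using comparable12[OF y(1)] y(1) unfolding tree_meet_def strict_suffix_def by blast
      moreover have "\<not> suffix z s"
        using s v0 \<open>z \<in> t2\<close> no_strict_suffix2 suffix_order.le_less_trans suffix_order.less_le_trans
        by blast
      ultimately show thesis
        using that[of y z] y True no_strict_suffix1 unfolding tree_meet_def strict_suffix_def
        by blast
    qed (use that y suffix_order.less_le_not_le in blast)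
  next
    case False
    then obtain u where u: "w \<in> t2" "u \<in> t1" "strict_suffix w u"
      using w unfolding tree_meet_def by blast
    obtain y where y: "y \<in> t2" "y \<noteq> w" "strict_suffix s y"
      using irreducible_treeD[OF assms(2) u(1) s] by blast
    show thesis
    proof (cases "y \<in> tree_meet t1 t2")
      case False
      then obtain z where "z \<in> t1" "strict_suffix z y"
        using comparable21[OF y(1)] y(1) unfolding tree_meet_def by blast
      moreover have "\<not> suffix z s"
        using s u \<open>z \<in> t1\<close> no_strict_suffix1 suffix_order.le_less_trans suffix_order.less_trans
        by blast
      ultimately show thesis
        using that[of y z] y \<open>w \<notin> t1\<close> unfolding tree_meet_def strict_suffix_def by blast
    qed (use that y suffix_order.less_le_not_le in blast)
  qed
  then have "strict_suffix s z"
    using suffix_same_cases unfolding strict_suffix_def by blast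
  then show "\<exists>y\<in>tree_meet t1 t2. y \<noteq> w \<and> strict_suffix s y"
    using z by blast
qed

lemma covers_tree_join:
  assumes "covers t1 u" "covers t2 u"
  shows "covers (tree_join t1 t2) u"
proof -
  obtain w1 where w1: "w1 \<in> t1" "suffix w1 u \<or> suffix u w1" using assms(1) unfolding covers_def by blast
  obtain w2 where w2: "w2 \<in> t2" "suffix w2 u \<or> suffix u w2" using assms(2) unfolding covers_def by blast
  show ?thesis
  proof (cases "\<exists>v\<in>t2. suffix v w1")
    case True
    then have "w1 \<in> tree_join t1 t2" using w1 unfolding tree_join_def by blast
    then show ?thesis using w1 unfolding covers_def by blast
  next
    case no: False
    show ?thesis
    proof (cases "suffix w1 u")
      case True
      have "suffix w1 w2 \<or> suffix u w2" using w2 True suffix_same_cases no by blast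
      then have "strict_suffix w1 w2"
        using no w2 True suffix_order.trans unfolding strict_suffix_def by blast
      then have "w2 \<in> tree_join t1 t2" using w1 w2 unfolding tree_join_def by blast
      then show ?thesis using w2 unfolding covers_def by blast
    next
      case False
      obtain v where v: "v \<in> t2" "strict_suffix w1 v"
        using comparable12[OF w1(1)] no unfolding strict_suffix_def by blast
      then have "v \<in> tree_join t1 t2" "suffix u v"
        using w1 False suffix_order.trans unfolding tree_join_def strict_suffix_def by blast+
      then show ?thesis unfolding covers_def by blast
    qed
  qed
qed

lemma covers_tree_meet:
  assumes "covers t1 u"
  shows "covers (tree_meet t1 t2) u"
proof -
  obtain w1 where w1: "w1 \<in> t1" "suffix w1 u \<or> suffix u w1" using assms unfolding covers_def by blast
  show ?thesis
  proof (cases "w1 \<in> tree_meet t1 t2")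
    case True then show ?thesis using w1 unfolding covers_def by blast
  next
    case False
    obtain v where v: "v \<in> t2" "strict_suffix v w1"
      using comparable12[OF w1(1)] False w1 unfolding tree_meet_def strict_suffix_def by blast
    then have "v \<in> tree_meet t1 t2" using w1 unfolding tree_meet_def by blast
    moreover have "suffix v u \<or> suffix u v"
      using w1(2) v suffix_same_cases suffix_order.trans unfolding strict_suffix_def by blast
    ultimately show ?thesis unfolding covers_def by blast
  qed
qed

lemma tree_meet_diff_right:
  "w \<in> tree_meet t1 t2 - t2 \<Longrightarrow> w \<in> t1 \<and> (\<exists>v\<in>t2. strict_suffix w v)"
  unfolding tree_meet_def strict_suffix_def by blast

lemma not_suffix_of_tree_meet_diff_right:
  assumes "w \<in> tree_meet t1 t2 - t2" "z \<in> t2"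
  shows "\<not> suffix z w"
  using tree_meet_diff_right[OF assms(1)] assms(2) no_strict_suffix2 suffix_order.le_less_trans
  by blast

lemma diff_tree_meet_eq_UN:
  "t2 - tree_meet t1 t2 = (\<Union>w\<in>tree_meet t1 t2 - t2. {z\<in>t2. strict_suffix w z})"
proof (intro equalityI subsetI)
  fix z assume z: "z \<in> t2 - tree_meet t1 t2"
  obtain v where v: "v \<in> t1" "strict_suffix v z \<or> v = z \<or> strict_suffix z v"
    using comparable21[of z] z by blast
  have "v \<noteq> z" "\<not> strict_suffix z v" using v z unfolding tree_meet_def by blast+
  then have "strict_suffix v z" using v(2) by blast
  moreover from this have "v \<in> tree_meet t1 t2 - t2"
    using v(1) z no_strict_suffix2 unfolding tree_meet_def strict_suffix_def by blast
  ultimately show "z \<in> (\<Union>w\<in>tree_meet t1 t2 - t2. {z\<in>t2. strict_suffix w z})"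
    using z by blast
next
  fix z assume "z \<in> (\<Union>w\<in>tree_meet t1 t2 - t2. {z\<in>t2. strict_suffix w z})"
  then obtain w where w: "w \<in> t1" and z: "z \<in> t2" "strict_suffix w z"
    using tree_meet_diff_right by blast
  have "z \<notin> t1" using w z no_strict_suffix1 by blast
  moreover have "\<not> strict_suffix z u" if "u \<in> t1" for u
    using w z that no_strict_suffix1 suffix_order.less_trans by blast
  ultimately show "z \<in> t2 - tree_meet t1 t2"
    using z unfolding tree_meet_def by blast
qed

lemma disjoint_strict_suffix_extensions:
  assumes "w1 \<in> tree_meet t1 t2 - t2" "w2 \<in> tree_meet t1 t2 - t2" "w1 \<noteq> w2"
  shows "{z\<in>t2. strict_suffix w1 z} \<inter> {z\<in>t2. strict_suffix w2 z} = {}"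
proof (intro equals0I)
  fix z assume "z \<in> {z\<in>t2. strict_suffix w1 z} \<inter> {z\<in>t2. strict_suffix w2 z}"
  then have "suffix w1 w2 \<or> suffix w2 w1" using suffix_same_cases unfolding strict_suffix_def by blast
  moreover have "w1 \<in> t1" "w2 \<in> t1" using assms tree_meet_diff_right by blast+
  ultimately show False using assms(3) suffix_freeD[OF suffix_free1] by blast
qed

end

section \<open>Candidate trees and occurrence counts\<close>

lemma tree_height_le_iff:
  "finite \<tau> \<Longrightarrow> tree_height \<tau> \<le> k \<longleftrightarrow> (\<forall>w\<in>\<tau>. length w \<le> k)"
  unfolding tree_height_def by auto

lemma cand_trees_iff:
  "\<tau> \<in> cand_trees X d n \<longleftrightarrow> irreducible_tree \<tau> \<and> (\<forall>w\<in>\<tau>. length w \<le> d n \<and> 0 < Ntot X d n w) \<and>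
     (\<forall>u. length u \<le> d n \<longrightarrow> 0 < Ntot X d n u \<longrightarrow> covers \<tau> u)"
  unfolding cand_trees_def covers_def irreducible_tree_def
  by (auto simp: tree_height_le_iff)

lemma compatible_trees_if_cand_trees:
  assumes "t1 \<in> cand_trees X d n" "t2 \<in> cand_trees X d n"
  shows "compatible_trees t1 t2"
  using assms unfolding cand_trees_iff irreducible_tree_iff by unfold_locales blast+

lemma tree_join_in_cand_trees:
  assumes "t1 \<in> cand_trees X d n" "t2 \<in> cand_trees X d n"
  shows "tree_join t1 t2 \<in> cand_trees X d n"
proof -
  interpret compatible_trees t1 t2 using compatible_trees_if_cand_trees[OF assms] .
  show ?thesis
    using assms irreducible_tree_join covers_tree_join tree_join_subset unfolding cand_trees_iff
    by blast
qed

lemma tree_meet_in_cand_trees: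
  assumes "t1 \<in> cand_trees X d n" "t2 \<in> cand_trees X d n"
  shows "tree_meet t1 t2 \<in> cand_trees X d n"
proof -
  interpret compatible_trees t1 t2 using compatible_trees_if_cand_trees[OF assms] .
  show ?thesis
    using assms irreducible_tree_meet covers_tree_meet tree_meet_subset unfolding cand_trees_iff
    by blast
qed

definition window :: "(nat \<Rightarrow> 'a) \<Rightarrow> nat \<Rightarrow> nat \<Rightarrow> 'a list" where
  "window X t k = map (\<lambda>i. X (t - k + i)) [0..<k]"

lemma length_window [simp]: "length (window X t k) = k"
  unfolding window_def by simp

lemma window_split:
  "j \<le> k \<Longrightarrow> k \<le> t \<Longrightarrow> window X t k = window X (t - j) (k - j) @ window X t j"
  unfolding window_def by (rule nth_equalityI) (auto simp: nth_append)

lemma suffix_window_iff: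
  assumes "k \<le> t"
  shows "suffix w (window X t k) \<longleftrightarrow> length w \<le> k \<and> w = window X t (length w)"
proof
  assume w: "suffix w (window X t k)"
  then have "length w \<le> k" using suffix_length_le by fastforce
  moreover have "suffix (window X t (length w)) (window X t k)"
    using window_split[OF \<open>length w \<le> k\<close> assms] unfolding suffix_def by blast
  ultimately show "length w \<le> k \<and> w = window X t (length w)"
    using w suffix_length_suffix suffix_order.antisym by (metis length_window order_refl)
next
  assume "length w \<le> k \<and> w = window X t (length w)"
  then show "suffix w (window X t k)"
    using window_split[of "length w" k t X] assms unfolding suffix_def by metis
qed

definition occurrences :: "(nat \<Rightarrow> 'a) \<Rightarrow> (nat \<Rightarrow> nat) \<Rightarrow> nat \<Rightarrow> 'a list \<Rightarrow> 'a \<Rightarrow> nat set" where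
  "occurrences X d n w a = {t \<in> {d n + 1..n}. X t = a \<and> suffix w (window X t (d n))}"

lemma finite_occurrences [simp]: "finite (occurrences X d n w a)"
  unfolding occurrences_def by simp

lemma Ncount_snoc_eq_card:
  assumes "length w \<le> d n"
  shows "Ncount X d n (w @ [a]) = card (occurrences X d n w a)"
proof -
  have "(\<forall>i<length (w @ [a]). X (t + 1 - length (w @ [a]) + i) = (w @ [a]) ! i) \<longleftrightarrow>
        X t = a \<and> suffix w (window X t (d n))" if "t \<in> {d n + 1..n}" for t
  proof -
    have "(\<forall>i<length (w @ [a]). X (t + 1 - length (w @ [a]) + i) = (w @ [a]) ! i) \<longleftrightarrow>
          (\<forall>i<length w. X (t - length w + i) = w ! i) \<and> X t = a"
      using assms that by (auto simp: nth_append less_Suc_eq)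
    also have "(\<forall>i<length w. X (t - length w + i) = w ! i) \<longleftrightarrow> w = window X t (length w)"
      unfolding list_eq_iff_nth_eq window_def by auto
    also have "\<dots> \<longleftrightarrow> suffix w (window X t (d n))"
      using suffix_window_iff[of "d n" t w X] assms that by auto
    finally show ?thesis by blast
  qed
  then show ?thesis
    unfolding Ncount_def occurrences_def by (intro arg_cong[where f = card] Collect_cong) blast
qed

lemma Ncount_snoc_le_Ntot: "Ncount X d n (w @ [a]) \<le> Ntot X d n w"
  unfolding Ntot_def by (rule member_le_sum) auto

lemma Ntot_window_pos:
  assumes "t \<in> {d n + 1..n}"
  shows "0 < Ntot X d n (window X t (d n))"
proof -
  have "t \<in> occurrences X d n (window X t (d n)) (X t)"
    using assms unfolding occurrences_def by simp
  then have "0 < Ncount X d n (window X t (d n) @ [X t])"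
    by (subst Ncount_snoc_eq_card) (auto simp: card_gt_0_iff)
  then show ?thesis using Ncount_snoc_le_Ntot order_less_le_trans by blast
qed

(* Each occurrence of w is an occurrence of exactly one leaf above w: the leaf that is a suffix
   of the full context window, which the candidate tree must cover. *)
lemma Ncount_snoc_split:
  assumes \<tau>: "\<tau> \<in> cand_trees X d n" and w: "length w \<le> d n" "\<forall>z\<in>\<tau>. \<not> suffix z w"
  shows "Ncount X d n (w @ [a]) = (\<Sum>z\<in>{z\<in>\<tau>. strict_suffix w z}. Ncount X d n (z @ [a]))"
proof -
  let ?G = "{z\<in>\<tau>. strict_suffix w z}"
  have len: "length z \<le> d n" if "z \<in> \<tau>" for z
    using \<tau> that unfolding cand_trees_iff by blast
  have sf: "suffix_free \<tau>" using \<tau> unfolding cand_trees_iff irreducible_tree_def by blast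
  have "occurrences X d n w a = (\<Union>z\<in>?G. occurrences X d n z a)"
  proof (intro equalityI subsetI)
    fix t assume t: "t \<in> occurrences X d n w a"
    let ?u = "window X t (d n)"
    have "covers \<tau> ?u"
      using \<tau> Ntot_window_pos[of t d n X] t unfolding cand_trees_iff occurrences_def by auto
    then obtain z where z: "z \<in> \<tau>" "suffix z ?u \<or> suffix ?u z" unfolding covers_def by blast
    then have zu: "suffix z ?u" using len[of z] by (auto simp: suffix_def)
    then have "strict_suffix w z"
      using t z(1) w(2) suffix_same_cases unfolding occurrences_def strict_suffix_def by blast
    then show "t \<in> (\<Union>z\<in>?G. occurrences X d n z a)"
      using t z(1) zu unfolding occurrences_def by blast
  qed (auto simp: occurrences_def strict_suffix_def intro: suffix_order.trans)
  moreover have "occurrences X d n z1 a \<inter> occurrences X d n z2 a = {}"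
    if "z1 \<in> ?G" "z2 \<in> ?G" "z1 \<noteq> z2" for z1 z2
  proof (intro equals0I)
    fix t assume "t \<in> occurrences X d n z1 a \<inter> occurrences X d n z2 a"
    then have "suffix z1 z2 \<or> suffix z2 z1" using suffix_same_cases unfolding occurrences_def by blast
    then show False using suffix_freeD[OF sf] that by blast
  qed
  moreover have "finite ?G" using \<tau> unfolding cand_trees_iff irreducible_tree_def by simp
  ultimately have "card (occurrences X d n w a) = (\<Sum>z\<in>?G. card (occurrences X d n z a))"
    by (simp add: card_UN_disjoint)
  then show ?thesis by (simp add: Ncount_snoc_eq_card w(1) len)
qed

section \<open>Maximised likelihood\<close>

lemma sum_mult_ln_le_empirical:
  fixes n :: "'b \<Rightarrow> nat" and q :: "'b \<Rightarrow> real"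
  assumes "finite B" and n: "\<And>a. a \<in> B \<Longrightarrow> 0 < n a" and q: "\<And>a. a \<in> B \<Longrightarrow> 0 < q a"
    and "sum q B \<le> 1"
  shows "(\<Sum>a\<in>B. real (n a) * ln (q a)) \<le> (\<Sum>a\<in>B. real (n a) * ln (real (n a) / real (sum n B)))"
proof -
  define N where "N = real (sum n B)"
  have step: "real (n a) * ln (q a) - real (n a) * ln (real (n a) / N) \<le> N * q a - real (n a)"
    if a: "a \<in> B" for a
  proof -
    have "n a \<le> sum n B" using \<open>finite B\<close> a by (intro member_le_sum) auto
    then have "real (n a) \<le> N" unfolding N_def of_nat_le_iff .
    then have pos: "0 < real (n a)" "0 < N" "0 < real (n a) / N" using n[OF a] by auto
    have "real (n a) * ln (q a) - real (n a) * ln (real (n a) / N)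
          = real (n a) * ln (q a / (real (n a) / N))"
      by (subst ln_divide_pos[OF q[OF a] pos(3)]) (simp add: right_diff_distrib)
    also have "\<dots> \<le> real (n a) * (q a / (real (n a) / N) - 1)"
      using q[OF a] pos by (intro mult_left_mono ln_le_minus_one divide_pos_pos) auto
    also have "\<dots> = N * q a - real (n a)" using pos by (simp add: field_simps)
    finally show ?thesis .
  qed
  have N_sum: "(\<Sum>a\<in>B. real (n a)) = N" unfolding N_def by simp
  have "(\<Sum>a\<in>B. real (n a) * ln (q a)) - (\<Sum>a\<in>B. real (n a) * ln (real (n a) / N))
        \<le> (\<Sum>a\<in>B. N * q a - real (n a))"
    unfolding sum_subtractf[symmetric] by (rule sum_mono) (rule step)
  also have "\<dots> = N * sum q B - N" by (simp add: sum_subtractf sum_distrib_left N_sum)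
  also have "\<dots> \<le> 0"
  proof -
    have "0 \<le> N" unfolding N_def by (rule of_nat_0_le_iff)
    then show ?thesis using mult_left_mono[OF \<open>sum q B \<le> 1\<close>] by simp
  qed
  finally show ?thesis unfolding N_def by simp
qed

lemma prod_power_le_empirical:
  fixes n :: "'b::finite \<Rightarrow> nat" and q :: "'b \<Rightarrow> real"
  assumes q0: "\<And>a. 0 \<le> q a" and q1: "sum q UNIV \<le> 1"
  shows "(\<Prod>a\<in>UNIV. q a ^ n a) \<le> (\<Prod>a\<in>UNIV. (real (n a) / real (sum n UNIV)) ^ n a)"
proof -
  define B where "B = {a. 0 < n a}"
  have on_B: "(\<Prod>a\<in>UNIV. f a ^ n a) = (\<Prod>a\<in>B. f a ^ n a)" for f :: "'b \<Rightarrow> real"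
    unfolding B_def by (rule prod.mono_neutral_right) auto
  have sum_B: "sum n B = sum n UNIV"
    unfolding B_def by (rule sum.mono_neutral_left) auto
  have B_pos: "\<And>a. a \<in> B \<Longrightarrow> 0 < n a" unfolding B_def by simp
  define p where "p = (\<lambda>a. real (n a) / real (sum n B))"
  have p_pos: "0 < p a" if "a \<in> B" for a
  proof -
    have "n a \<le> sum n B" using that sum_B member_le_sum[of a UNIV n] by simp
    with B_pos[OF that] show ?thesis unfolding p_def by (simp del: of_nat_sum)
  qed
  have p_prod_pos: "0 < (\<Prod>a\<in>B. p a ^ n a)" by (rule prod_pos) (simp add: p_pos)
  have "?thesis \<longleftrightarrow> (\<Prod>a\<in>B. q a ^ n a) \<le> (\<Prod>a\<in>B. p a ^ n a)"
    by (simp only: on_B sum_B p_def)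
  moreover have "(\<Prod>a\<in>B. q a ^ n a) \<le> (\<Prod>a\<in>B. p a ^ n a)"
  proof (cases "\<exists>a\<in>B. q a = 0")
    case True
    then have "(\<Prod>a\<in>B. q a ^ n a) = 0" by (auto simp: B_def)
    then show ?thesis using p_prod_pos by linarith
  next
    case False
    then have qB: "\<And>a. a \<in> B \<Longrightarrow> 0 < q a" using q0 by (metis order_neq_le_trans)
    have "sum q B \<le> 1" using q1 sum_mono2[of UNIV B q] q0 by simp
    have "ln (\<Prod>a\<in>B. q a ^ n a) = (\<Sum>a\<in>B. real (n a) * ln (q a))"
      using qB by (subst ln_prod) (auto simp: ln_realpow dest: qB)
    also have "\<dots> \<le> (\<Sum>a\<in>B. real (n a) * ln (p a))"
      unfolding p_def by (rule sum_mult_ln_le_empirical[OF finite B_pos qB \<open>sum q B \<le> 1\<close>])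
    also have "\<dots> = ln (\<Prod>a\<in>B. p a ^ n a)"
      using p_pos by (subst ln_prod) (auto simp: ln_realpow dest: p_pos)
    finally have "ln (\<Prod>a\<in>B. q a ^ n a) \<le> ln (\<Prod>a\<in>B. p a ^ n a)" .
    moreover have "0 < (\<Prod>a\<in>B. q a ^ n a)" by (rule prod_pos) (simp add: qB)
    ultimately show ?thesis using p_prod_pos by simp
  qed
  ultimately show ?thesis by blast
qed

definition node_likelihood :: "(nat \<Rightarrow> 'a::finite) \<Rightarrow> (nat \<Rightarrow> nat) \<Rightarrow> nat \<Rightarrow> 'a list \<Rightarrow> real" where
  "node_likelihood X d n w = (\<Prod>a\<in>UNIV. phat X d n a w ^ Ncount X d n (w @ [a]))"

lemma likelihood_eq_prod_node_likelihood:
  "likelihood X d n \<tau> = (\<Prod>w\<in>\<tau>. node_likelihood X d n w)"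
  unfolding likelihood_def node_likelihood_def ..

lemma node_likelihood_pos: "0 < node_likelihood X d n w"
  unfolding node_likelihood_def
proof (rule prod_pos)
  fix a
  have "Ncount X d n (w @ [a]) = 0 \<or> 0 < phat X d n a w"
    using Ncount_snoc_le_Ntot[of X d n w a] unfolding phat_def by (auto intro!: divide_pos_pos)
  then show "0 < phat X d n a w ^ Ncount X d n (w @ [a])" by auto
qed

lemma likelihood_pos: "0 < likelihood X d n \<tau>"
  unfolding likelihood_eq_prod_node_likelihood by (rule prod_pos) (simp add: node_likelihood_pos)

(* The pooled estimate at w is an admissible distribution at every z in G. *)
lemma node_likelihood_le_prod:
  assumes "finite G" and pooled: "\<And>a. Ncount X d n (w @ [a]) = (\<Sum>z\<in>G. Ncount X d n (z @ [a]))"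
  shows "node_likelihood X d n w \<le> (\<Prod>z\<in>G. node_likelihood X d n z)"
proof -
  let ?q = "\<lambda>a. phat X d n a w" and ?N = "\<lambda>z a. Ncount X d n (z @ [a])"
  have q0: "0 \<le> ?q a" for a unfolding phat_def by simp
  have "sum ?q UNIV = (\<Sum>a\<in>UNIV. real (?N w a)) / real (Ntot X d n w)"
    unfolding phat_def by (rule sum_divide_distrib[symmetric])
  also have "\<dots> = real (Ntot X d n w) / real (Ntot X d n w)"
    unfolding Ntot_def by simp
  finally have q1: "sum ?q UNIV \<le> 1" by simp
  have "node_likelihood X d n w = (\<Prod>a\<in>UNIV. \<Prod>z\<in>G. ?q a ^ ?N z a)"
    unfolding node_likelihood_def pooled by (simp add: power_sum)
  also have "\<dots> = (\<Prod>z\<in>G. \<Prod>a\<in>UNIV. ?q a ^ ?N z a)" by (rule prod.swap)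
  also have "\<dots> \<le> (\<Prod>z\<in>G. node_likelihood X d n z)"
  proof (rule prod_mono)
    fix z
    have "(\<Prod>a\<in>UNIV. ?q a ^ ?N z a) \<le> (\<Prod>a\<in>UNIV. (real (?N z a) / real (Ntot X d n z)) ^ ?N z a)"
      using prod_power_le_empirical[OF q0 q1, of "?N z"] by (simp add: Ntot_def)
    also have "\<dots> = node_likelihood X d n z" unfolding node_likelihood_def phat_def ..
    finally show "0 \<le> (\<Prod>a\<in>UNIV. ?q a ^ ?N z a) \<and> (\<Prod>a\<in>UNIV. ?q a ^ ?N z a) \<le> node_likelihood X d n z"
      using q0 by (simp add: prod_nonneg)
  qed
  finally show ?thesis .
qed

lemma likelihood_tree_meet_le:
  assumes t1: "t1 \<in> cand_trees X d n" and t2: "t2 \<in> cand_trees X d n"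
  shows "likelihood X d n (tree_meet t1 t2) \<le> likelihood X d n t2"
proof -
  interpret compatible_trees t1 t2 using compatible_trees_if_cand_trees[OF t1 t2] .
  let ?M = "tree_meet t1 t2" and ?F = "node_likelihood X d n"
  let ?G = "\<lambda>w. {z\<in>t2. strict_suffix w z}"
  have fin: "finite t1" "finite t2" using t1 t2 unfolding cand_trees_iff irreducible_tree_def by blast+
  then have "finite ?M" using tree_meet_subset finite_subset by blast
  have "?F w \<le> prod ?F (?G w)" if w: "w \<in> ?M - t2" for w
  proof (rule node_likelihood_le_prod)
    show "finite (?G w)" using fin by simp
    have "length w \<le> d n" using w tree_meet_diff_right t1 unfolding cand_trees_iff by blast
    then show "Ncount X d n (w @ [a]) = (\<Sum>z\<in>?G w. Ncount X d n (z @ [a]))" for a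
      using Ncount_snoc_split[OF t2] not_suffix_of_tree_meet_diff_right[OF w] by blast
  qed
  then have "prod ?F (?M - t2) \<le> (\<Prod>w\<in>?M - t2. prod ?F (?G w))"
    by (intro prod_mono) (simp add: node_likelihood_pos less_imp_le)
  also have "\<dots> = prod ?F (t2 - ?M)"
    unfolding diff_tree_meet_eq_UN using \<open>finite ?M\<close> fin disjoint_strict_suffix_extensions
    by (intro prod.UNION_disjoint[symmetric]) auto
  finally have "prod ?F (?M \<inter> t2) * prod ?F (?M - t2) \<le> prod ?F (t2 \<inter> ?M) * prod ?F (t2 - ?M)"
    by (simp add: Int_commute node_likelihood_pos prod_pos)
  then show ?thesis
    unfolding likelihood_eq_prod_node_likelihood
    using prod.Int_Diff[OF \<open>finite ?M\<close>, of ?F t2] prod.Int_Diff[OF fin(2), of ?F ?M] by simp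
qed

section \<open>The BIC criterion\<close>

lemma bic_crit_eq_sum:
  assumes "finite \<tau>"
  shows "bic_crit X d chi n c \<tau> =
    (\<Sum>w\<in>\<tau>. ln (node_likelihood X d n w) - c * real (card {a. chi (w @ [a])}) * ln (real n))"
proof -
  have "ln (likelihood X d n \<tau>) = (\<Sum>w\<in>\<tau>. ln (node_likelihood X d n w))"
    unfolding likelihood_eq_prod_node_likelihood
    by (rule ln_prod[OF assms]) (metis node_likelihood_pos order_less_irrefl)
  then show ?thesis
    by (simp add: bic_crit_def df_def sum_subtractf sum_distrib_left sum_distrib_right)
qed

lemma bic_crit_tree_join_tree_meet:
  assumes t1: "t1 \<in> cand_trees X d n" and t2: "t2 \<in> cand_trees X d n"
  shows "bic_crit X d chi n c (tree_join t1 t2) + bic_crit X d chi n c (tree_meet t1 t2) =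
         bic_crit X d chi n c t1 + bic_crit X d chi n c t2"
proof -
  interpret compatible_trees t1 t2 using compatible_trees_if_cand_trees[OF t1 t2] .
  let ?f = "\<lambda>w. ln (node_likelihood X d n w) - c * real (card {a. chi (w @ [a])}) * ln (real n)"
  have fin: "finite t1" "finite t2" using t1 t2 unfolding cand_trees_iff irreducible_tree_def by blast+
  then have finJM: "finite (tree_join t1 t2)" "finite (tree_meet t1 t2)"
    using tree_join_subset tree_meet_subset finite_subset by blast+
  have "bic_crit X d chi n c (tree_join t1 t2) + bic_crit X d chi n c (tree_meet t1 t2) =
        sum ?f (tree_join t1 t2 \<union> tree_meet t1 t2) + sum ?f (tree_join t1 t2 \<inter> tree_meet t1 t2)"
    using finJM by (simp add: bic_crit_eq_sum sum.union_inter)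
  also have "\<dots> = sum ?f (t1 \<union> t2) + sum ?f (t1 \<inter> t2)"
    unfolding tree_join_Un_tree_meet tree_join_Int_tree_meet ..
  also have "\<dots> = bic_crit X d chi n c t1 + bic_crit X d chi n c t2"
    using fin by (simp add: bic_crit_eq_sum sum.union_inter)
  finally show ?thesis .
qed

(* The gain bic_crit c tau - bic_crit c sigma is affine in c and nonnegative at c = 0 and c = c2. *)
lemma bic_crit_le_smaller_penalty:
  assumes "likelihood X d n \<sigma> \<le> likelihood X d n \<tau>"
    and "bic_crit X d chi n c2 \<sigma> \<le> bic_crit X d chi n c2 \<tau>" and "0 \<le> c1" "c1 \<le> c2"
  shows "bic_crit X d chi n c1 \<sigma> \<le> bic_crit X d chi n c1 \<tau>"
proof -
  define gain where "gain = ln (likelihood X d n \<tau>) - ln (likelihood X d n \<sigma>)"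
  define extra where "extra = (real (df chi \<tau>) - real (df chi \<sigma>)) * ln (real n)"
  have "0 \<le> gain"
    unfolding gain_def using assms(1) likelihood_pos[of X d n \<sigma>] likelihood_pos[of X d n \<tau>] by simp
  moreover have "c2 * extra \<le> gain" using assms(2) unfolding gain_def extra_def bic_crit_def
    by (simp add: algebra_simps)
  moreover have "c1 * extra \<le> c2 * extra \<or> c1 * extra \<le> 0"
    using assms(3,4) by (cases "0 \<le> extra") (auto intro: mult_right_mono mult_nonneg_nonpos)
  ultimately have "c1 * extra \<le> gain" by linarith
  then show ?thesis unfolding gain_def extra_def bic_crit_def by (simp add: algebra_simps)
qed

theorem mainTheorem5:
  fixes X :: "nat \<Rightarrow> 'a::finite" and d :: "nat \<Rightarrow> nat" and chi :: "'a list \<Rightarrow> bool"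
    and n :: nat and c1 c2 :: real
  assumes "filterlim d at_top at_top"
    and "consistent_incidence chi"
    and "0 < c1" and "c1 < c2"
    and "\<exists>!\<tau>. is_bic_max X d chi n c1 \<tau>"
    and "\<exists>!\<tau>. is_bic_max X d chi n c2 \<tau>"
  shows "tree_le (tau_bic X d chi n c2) (tau_bic X d chi n c1)"
proof -
  let ?t1 = "tau_bic X d chi n c1" and ?t2 = "tau_bic X d chi n c2"
  let ?J = "tree_join ?t1 ?t2" and ?M = "tree_meet ?t1 ?t2"
  have max1: "is_bic_max X d chi n c1 ?t1" and max2: "is_bic_max X d chi n c2 ?t2"
    unfolding tau_bic_def by (rule theI'[OF assms(5)], rule theI'[OF assms(6)])
  then have cand: "?t1 \<in> cand_trees X d n" "?t2 \<in> cand_trees X d n"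
    unfolding is_bic_max_def by blast+
  have "bic_crit X d chi n c2 ?M \<le> bic_crit X d chi n c2 ?t2"
    using max2 tree_meet_in_cand_trees[OF cand] unfolding is_bic_max_def by blast
  then have "bic_crit X d chi n c1 ?M \<le> bic_crit X d chi n c1 ?t2"
    by (rule bic_crit_le_smaller_penalty[OF likelihood_tree_meet_le[OF cand]])
      (use assms(3,4) in auto)
  then have "bic_crit X d chi n c1 ?t1 \<le> bic_crit X d chi n c1 ?J"
    using bic_crit_tree_join_tree_meet[OF cand, of chi c1] by linarith
  then have "is_bic_max X d chi n c1 ?J"
    using max1 tree_join_in_cand_trees[OF cand] order_trans unfolding is_bic_max_def by blast
  then have "?t1 = ?J" unfolding tau_bic_def by (rule the1_equality[OF assms(5)])
  then show ?thesis using tree_le_tree_join[of ?t2 ?t1] by simp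
qed

end
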